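(* Let $p\ge1$, $\sigma,B,R>0$, $S_0:=\{x\in\mathbb{R}^p:\|x\|\le B\}$, $\mu$ a probability measure on $S_0$, and $G^*$ a probability measure on $\{\beta:\|\beta\|\le R\}$. Let $\mathcal{G}$ be the class of functions $x\mapsto\frac12\mathfrak{H}^2(f^G_x,f^{G^*}_x)$ on $S_0$, as $G$ ranges over all probability measures on $\{\beta\in\mathbb{R}^p:\|\beta\|\le R\}$, and let $T_{G^*}:=\int\big(\int\sqrt{f^{G^*}_x(y)}\,dy\big)^2d\mu(x)$ (assumed finite). Then for every $\epsilon>0$, $$N_{[]}(\epsilon,\mathcal{G},L_2(\mu))\le N\Big(\frac{\epsilon^2}{4T_{G^*}},\mathcal{M}_R,\|\cdot\|_\infty\Big).$$
   Context: $\phi$ is the standard normal density; $f^G_x(y):=\int\frac1\sigma\phi\big(\frac{y-x^\top\beta}{\sigma}\big)\,dG(\beta)$; $\mathfrak{H}^2(f,g)=\int(\sqrt f-\sqrt g)^2dy$. $\mathcal{M}_R:=\{(x,y)\mapsto f^G_x(y):G\text{ a probability measure supported on }\{\beta:\|\beta\|\le R\}\}$, and $\|\cdot\|_\infty$ is the pseudometric $(f^G,f^{G'})\mapsto\sup_{x\in S_0,y\in\mathbb{R}}|f^G_x(y)-f^{G'}_x(y)|$; $N(\eta,T,\mathfrak{d})$ is the smallest cardinality of an $\eta$-cover of $T$ under $\mathfrak{d}$. $N_{[]}(\epsilon,\mathcal{G},L_2(\mu))$ is the $\epsilon$-bracketing number: the smallest number of pairs of functions $(g^L_j,g^U_j)$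 with $\|g^U_j-g^L_j\|_{L_2(\mu)}\le\epsilon$ such that every $g\in\mathcal{G}$ satisfies $g^L_j\le g\le g^U_j$ for some $j$. *)

theory Defs
  imports "HOL-Probability.Probability"
begin

definition mix_dens :: "real \<Rightarrow> 'a::euclidean_space measure \<Rightarrow> 'a \<Rightarrow> real \<Rightarrow> real" where
  "mix_dens \<sigma> G x y = (\<integral>\<beta>. (1 / \<sigma>) * std_normal_density ((y - x \<bullet> \<beta>) / \<sigma>) \<partial>G)"

definition mixing_measure :: "real \<Rightarrow> 'a::euclidean_space measure \<Rightarrow> bool" where
  "mixing_measure R G \<longleftrightarrow> prob_space G \<and> sets G = sets (borel :: 'a measure) \<and>
     (AE \<beta> in G. norm \<beta> \<le> R)"

definition hellinger2 :: "(real \<Rightarrow> real) \<Rightarrow> (real \<Rightarrow> real) \<Rightarrow> real" where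
  "hellinger2 f g = (\<integral>y. (sqrt (f y) - sqrt (g y))\<^sup>2 \<partial>lborel)"

definition mix_class :: "real \<Rightarrow> real \<Rightarrow> ('a::euclidean_space \<Rightarrow> real \<Rightarrow> real) set" where
  "mix_class \<sigma> R = {mix_dens \<sigma> G | G. mixing_measure R G}"

definition sup_dist :: "'a set \<Rightarrow> ('a \<Rightarrow> real \<Rightarrow> real) \<Rightarrow> ('a \<Rightarrow> real \<Rightarrow> real) \<Rightarrow> real" where
  "sup_dist S f g = (SUP xy \<in> S \<times> UNIV. \<bar>f (fst xy) (snd xy) - g (fst xy) (snd xy)\<bar>)"

definition covering_number :: "('b \<Rightarrow> 'b \<Rightarrow> real) \<Rightarrow> 'b set \<Rightarrow> real \<Rightarrow> enat" where
  "covering_number d T \<eta> = (INF n \<in> {n. \<exists>c :: nat \<Rightarrow> 'b. (\<forall>j<n. c j \<in> T) \<and>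
      (\<forall>t\<in>T. \<exists>j<n. d t (c j) \<le> \<eta>)}. enat n)"

definition bracketing_number :: "'a measure \<Rightarrow> 'a set \<Rightarrow> real \<Rightarrow> ('a \<Rightarrow> real) set \<Rightarrow> enat" where
  "bracketing_number \<mu> S \<epsilon> \<G> = (INF n \<in> {n. \<exists>L U :: nat \<Rightarrow> 'a \<Rightarrow> real.
      (\<forall>j<n. L j \<in> borel_measurable \<mu> \<and> U j \<in> borel_measurable \<mu> \<and>
         sqrt (enn2real (\<integral>\<^sup>+x. ennreal ((U j x - L j x)\<^sup>2) \<partial>\<mu>)) \<le> \<epsilon> \<and>
         (\<integral>\<^sup>+x. ennreal ((U j x - L j x)\<^sup>2) \<partial>\<mu>) < \<infinity>) \<and>
      (\<forall>g\<in>\<G>. \<exists>j<n. \<forall>x\<in>S. L j x \<le> g x \<and> g x \<le> U j x)}. enat n)"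

end

theory Submission
  imports Defs
begin

text \<open>With the Hellinger affinity \<open>\<rho>(f, h) = \<integral> sqrt (f h)\<close> one has
  \<open>H\<^sup>2(f, h) / 2 = 1 - \<rho>(f, h)\<close> for probability densities, and \<open>|sqrt a - sqrt b| \<le> sqrt |a - b|\<close>
  gives \<open>|H\<^sup>2(f, h) / 2 - H\<^sup>2(f', h) / 2| \<le> sqrt \<eta> \<integral> sqrt h\<close> whenever \<open>|f - f'| \<le> \<eta>\<close> pointwise.
  Hence the centres \<open>f\<^sup>G\<^sup>j\<close> of an \<open>\<eta>\<close>-cover of \<open>\<M>\<^sub>R\<close> in sup distance yield brackets
  \<open>H\<^sup>2(f\<^sup>G\<^sup>j\<^sub>x, f\<^sup>G\<^sup>*\<^sub>x) / 2 \<plusminus> sqrt \<eta> \<integral> sqrt f\<^sup>G\<^sup>*\<^sub>x\<close> of \<open>L\<^sub>2(\<mu>)\<close>-width \<open>2 sqrt (\<eta> T\<^sub>G\<^sub>*)\<close>,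
  which equals \<open>\<epsilon>\<close> for \<open>\<eta> = \<epsilon>\<^sup>2 / (4 T\<^sub>G\<^sub>*)\<close>.\<close>

section \<open>Hellinger distance between probability densities\<close>

definition is_prob_density :: "(real \<Rightarrow> real) \<Rightarrow> bool" where
  "is_prob_density f \<longleftrightarrow> f \<in> borel_measurable lborel \<and> (\<forall>y. 0 \<le> f y) \<and>
     integrable lborel f \<and> (\<integral>y. f y \<partial>lborel) = 1"

lemma abs_sqrt_diff_le_sqrt_abs_diff:
  fixes a b :: real
  assumes "0 \<le> a" "0 \<le> b"
  shows "\<bar>sqrt a - sqrt b\<bar> \<le> sqrt \<bar>a - b\<bar>"
proof (rule real_le_rsqrt)
  have "\<bar>sqrt a - sqrt b\<bar>\<^sup>2 \<le> \<bar>sqrt a - sqrt b\<bar> * \<bar>sqrt a + sqrt b\<bar>"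
    unfolding power2_eq_square using assms by (intro mult_left_mono) (auto simp: abs_le_iff)
  also have "\<dots> = \<bar>a - b\<bar>"
    unfolding abs_mult[symmetric] using assms by (simp add: algebra_simps)
  finally show "\<bar>sqrt a - sqrt b\<bar>\<^sup>2 \<le> \<bar>a - b\<bar>" .
qed

lemma
  assumes f: "is_prob_density f" and h: "is_prob_density h"
  shows integrable_hellinger_affinity: "integrable lborel (\<lambda>y. sqrt (f y * h y))"
    and half_hellinger2_eq_affinity: "1/2 * hellinger2 f h = 1 - (\<integral>y. sqrt (f y * h y) \<partial>lborel)"
    and hellinger_affinity_le_1: "(\<integral>y. sqrt (f y * h y) \<partial>lborel) \<le> 1"
    and hellinger_affinity_nonneg: "0 \<le> (\<integral>y. sqrt (f y * h y) \<partial>lborel)"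
proof -
  have fi: "integrable lborel f" and hi: "integrable lborel h"
    and f0: "\<And>y. 0 \<le> f y" and h0: "\<And>y. 0 \<le> h y"
    and f1: "(\<integral>y. f y \<partial>lborel) = 1" and h1: "(\<integral>y. h y \<partial>lborel) = 1"
    using f h by (auto simp: is_prob_density_def)
  have amgm: "sqrt (f y * h y) \<le> (f y + h y) / 2" for y
    using f0 h0 by (metis arith_geo_mean_sqrt)
  show si: "integrable lborel (\<lambda>y. sqrt (f y * h y))"
    by (rule Bochner_Integration.integrable_bound[of _ "\<lambda>y. (f y + h y) / 2"])
       (use fi hi amgm f0 h0 in auto)
  have "(sqrt (f y) - sqrt (h y))\<^sup>2 = f y + h y - 2 * sqrt (f y * h y)" for y
    using f0 h0 by (simp add: power2_diff real_sqrt_mult)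
  then have "hellinger2 f h = (\<integral>y. f y + h y - 2 * sqrt (f y * h y) \<partial>lborel)"
    unfolding hellinger2_def by simp
  also have "\<dots> = 2 - 2 * (\<integral>y. sqrt (f y * h y) \<partial>lborel)"
    using fi hi si f1 h1 by simp
  finally show "1/2 * hellinger2 f h = 1 - (\<integral>y. sqrt (f y * h y) \<partial>lborel)" by simp
  have "(\<integral>y. sqrt (f y * h y) \<partial>lborel) \<le> (\<integral>y. (f y + h y) / 2 \<partial>lborel)"
    by (rule integral_mono) (use si fi hi amgm in auto)
  also have "\<dots> = 1" using fi hi f1 h1 by simp
  finally show "(\<integral>y. sqrt (f y * h y) \<partial>lborel) \<le> 1" .
  show "0 \<le> (\<integral>y. sqrt (f y * h y) \<partial>lborel)"
    by (intro integral_nonneg_AE AE_I2) (simp add: f0 h0)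
qed

lemma abs_half_hellinger2_diff_le:
  assumes f: "is_prob_density f" and f': "is_prob_density f'" and h: "is_prob_density h"
    and close: "\<And>y. \<bar>f y - f' y\<bar> \<le> \<eta>"
    and finite: "(\<integral>\<^sup>+y. ennreal (sqrt (h y)) \<partial>lborel) \<noteq> \<infinity>"
  shows "\<bar>1/2 * hellinger2 f h - 1/2 * hellinger2 f' h\<bar>
          \<le> sqrt \<eta> * enn2real (\<integral>\<^sup>+y. ennreal (sqrt (h y)) \<partial>lborel)"
proof -
  have [measurable]: "h \<in> borel_measurable lborel"
    and f0: "\<And>y. 0 \<le> f y" and h0: "\<And>y. 0 \<le> h y" and f'0: "\<And>y. 0 \<le> f' y"
    using f h f' by (auto simp: is_prob_density_def)
  have sqrt_h: "integrable lborel (\<lambda>y. sqrt (h y))"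
    by (rule integrableI_nonneg) (use finite h0 in \<open>auto simp: top.not_eq_extremum\<close>)
  note fh = integrable_hellinger_affinity[OF f h] and f'h = integrable_hellinger_affinity[OF f' h]
  have pointwise: "\<bar>sqrt (f y * h y) - sqrt (f' y * h y)\<bar> \<le> sqrt \<eta> * sqrt (h y)" for y
  proof -
    have "\<bar>sqrt (f y * h y) - sqrt (f' y * h y)\<bar> = \<bar>sqrt (f y) - sqrt (f' y)\<bar> * sqrt (h y)"
      using h0[of y] by (simp add: real_sqrt_mult abs_mult flip: left_diff_distrib)
    also have "\<dots> \<le> sqrt \<bar>f y - f' y\<bar> * sqrt (h y)"
      by (intro mult_right_mono abs_sqrt_diff_le_sqrt_abs_diff f0 f'0) (simp add: h0)
    also have "\<dots> \<le> sqrt \<eta> * sqrt (h y)"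
      by (intro mult_right_mono real_sqrt_le_mono close) (simp add: h0)
    finally show ?thesis .
  qed
  have "\<bar>1/2 * hellinger2 f h - 1/2 * hellinger2 f' h\<bar>
      = \<bar>\<integral>y. sqrt (f y * h y) - sqrt (f' y * h y) \<partial>lborel\<bar>"
    unfolding half_hellinger2_eq_affinity[OF f h] half_hellinger2_eq_affinity[OF f' h]
      Bochner_Integration.integral_diff[OF fh f'h] by (simp add: abs_minus_commute)
  also have "\<dots> \<le> (\<integral>y. \<bar>sqrt (f y * h y) - sqrt (f' y * h y)\<bar> \<partial>lborel)"
    by (rule integral_abs_bound)
  also have "\<dots> \<le> (\<integral>y. sqrt \<eta> * sqrt (h y) \<partial>lborel)"
    by (rule integral_mono) (use fh f'h sqrt_h pointwise in auto)
  also have "\<dots> = sqrt \<eta> * enn2real (\<integral>\<^sup>+y. ennreal (sqrt (h y)) \<partial>lborel)"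
    by (simp add: integral_eq_nn_integral h0)
  finally show ?thesis .
qed

text \<open>The value 1 where \<open>\<integral> sqrt h = \<infinity>\<close> is a harmless bound: half squared Hellinger
  distances lie in \<open>[0, 1]\<close>, and this happens only on a \<open>\<mu>\<close>-null set of \<open>x\<close>.\<close>
definition hellinger_envelope :: "real \<Rightarrow> (real \<Rightarrow> real) \<Rightarrow> real" where
  "hellinger_envelope \<eta> h =
     (if (\<integral>\<^sup>+y. ennreal (sqrt (h y)) \<partial>lborel) = \<infinity> then 1
      else sqrt \<eta> * enn2real (\<integral>\<^sup>+y. ennreal (sqrt (h y)) \<partial>lborel))"

lemma abs_half_hellinger2_diff_le_envelope:
  assumes f: "is_prob_density f" and f': "is_prob_density f'" and h: "is_prob_density h"
    and close: "\<And>y. \<bar>f y - f' y\<bar> \<le> \<eta>"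
  shows "\<bar>1/2 * hellinger2 f h - 1/2 * hellinger2 f' h\<bar> \<le> hellinger_envelope \<eta> h"
proof (cases "(\<integral>\<^sup>+y. ennreal (sqrt (h y)) \<partial>lborel) = \<infinity>")
  case True
  have "\<bar>1/2 * hellinger2 f h - 1/2 * hellinger2 f' h\<bar> \<le> 1"
    unfolding half_hellinger2_eq_affinity[OF f h] half_hellinger2_eq_affinity[OF f' h]
    using hellinger_affinity_le_1[OF f h] hellinger_affinity_le_1[OF f' h]
      hellinger_affinity_nonneg[OF f h] hellinger_affinity_nonneg[OF f' h]
    by (simp add: abs_le_iff)
  with True show ?thesis by (simp add: hellinger_envelope_def)
next
  case False
  then show ?thesis
    using abs_half_hellinger2_diff_le[OF f f' h close] by (simp add: hellinger_envelope_def)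
qed

lemma nn_integral_hellinger_envelope:
  assumes "\<eta> \<ge> 0"
    and meas: "(\<lambda>x. \<integral>\<^sup>+y. ennreal (sqrt (h x y)) \<partial>lborel) \<in> borel_measurable M"
    and finite: "(\<integral>\<^sup>+x. (\<integral>\<^sup>+y. ennreal (sqrt (h x y)) \<partial>lborel)\<^sup>2 \<partial>M) < \<infinity>"
  shows "(\<integral>\<^sup>+x. ennreal ((2 * hellinger_envelope \<eta> (h x))\<^sup>2) \<partial>M)
           = ennreal (4 * \<eta>) * (\<integral>\<^sup>+x. (\<integral>\<^sup>+y. ennreal (sqrt (h x y)) \<partial>lborel)\<^sup>2 \<partial>M)"
proof -
  define A where "A x = (\<integral>\<^sup>+y. ennreal (sqrt (h x y)) \<partial>lborel)" for x
  have "AE x in M. (A x)\<^sup>2 \<noteq> \<infinity>"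
    by (rule nn_integral_PInf_AE) (use meas finite in \<open>auto simp: A_def\<close>)
  then have "AE x in M. ennreal ((2 * hellinger_envelope \<eta> (h x))\<^sup>2) = ennreal (4 * \<eta>) * (A x)\<^sup>2"
  proof eventually_elim
    case (elim x)
    then have "A x = ennreal (enn2real (A x))"
      by (simp add: ennreal_enn2real_if power_eq_top_ennreal)
    moreover have "(2 * hellinger_envelope \<eta> (h x))\<^sup>2 = 4 * \<eta> * (enn2real (A x))\<^sup>2"
      using elim \<open>\<eta> \<ge> 0\<close> by (simp add: hellinger_envelope_def A_def power_eq_top_ennreal power_mult_distrib)
    ultimately show ?case
      using \<open>\<eta> \<ge> 0\<close> by (metis ennreal_mult' ennreal_power enn2real_nonneg mult_nonneg_nonneg zero_le_numeral)
  qed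
  then have "(\<integral>\<^sup>+x. ennreal ((2 * hellinger_envelope \<eta> (h x))\<^sup>2) \<partial>M) = (\<integral>\<^sup>+x. ennreal (4 * \<eta>) * (A x)\<^sup>2 \<partial>M)"
    by (rule nn_integral_cong_AE)
  also have "\<dots> = ennreal (4 * \<eta>) * (\<integral>\<^sup>+x. (A x)\<^sup>2 \<partial>M)"
    by (rule nn_integral_cmult) (use meas in \<open>simp add: A_def\<close>)
  finally show ?thesis unfolding A_def .
qed

lemma nn_integral_hellinger_envelope_le:
  fixes h :: "'a \<Rightarrow> real \<Rightarrow> real" and M :: "'a measure"
  defines "T \<equiv> \<integral>\<^sup>+x. (\<integral>\<^sup>+y. ennreal (sqrt (h x y)) \<partial>lborel)\<^sup>2 \<partial>M"
  assumes meas: "(\<lambda>x. \<integral>\<^sup>+y. ennreal (sqrt (h x y)) \<partial>lborel) \<in> borel_measurable M"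
    and finite: "T < \<infinity>"
  shows "(\<integral>\<^sup>+x. ennreal ((2 * hellinger_envelope (\<epsilon>\<^sup>2 / (4 * enn2real T)) (h x))\<^sup>2) \<partial>M) \<le> ennreal (\<epsilon>\<^sup>2)"
proof -
  define \<eta> where "\<eta> = \<epsilon>\<^sup>2 / (4 * enn2real T)"
  have "\<eta> \<ge> 0" unfolding \<eta>_def by simp
  have "(\<integral>\<^sup>+x. ennreal ((2 * hellinger_envelope \<eta> (h x))\<^sup>2) \<partial>M) = ennreal (4 * \<eta>) * T"
    using nn_integral_hellinger_envelope[OF \<open>\<eta> \<ge> 0\<close> meas] finite unfolding T_def by simp
  also have "\<dots> = ennreal (4 * \<eta> * enn2real T)"
    using \<open>\<eta> \<ge> 0\<close> finite by (simp add: ennreal_mult ennreal_enn2real_if)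
  also have "\<dots> \<le> ennreal (\<epsilon>\<^sup>2)"
    by (rule ennreal_leI) (cases "enn2real T = 0"; simp add: \<eta>_def)
  finally show ?thesis unfolding \<eta>_def .
qed

section \<open>Brackets from an approximating family\<close>

lemma bracketing_number_le_of_approximation:
  assumes "\<epsilon> \<ge> 0" and meas_c: "\<forall>j<n. c j \<in> borel_measurable \<mu>" and meas_w: "w \<in> borel_measurable \<mu>"
    and width: "(\<integral>\<^sup>+x. ennreal ((2 * w x)\<^sup>2) \<partial>\<mu>) \<le> ennreal (\<epsilon>\<^sup>2)"
    and approx: "\<forall>g\<in>\<G>. \<exists>j<n. \<forall>x\<in>S. \<bar>g x - c j x\<bar> \<le> w x"
  shows "bracketing_number \<mu> S \<epsilon> \<G> \<le> enat n"
proof -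
  define L where "L j x = c j x - w x" for j x
  define U where "U j x = c j x + w x" for j x
  have diff_UL: "U j x - L j x = 2 * w x" for j x
    unfolding L_def U_def by simp
  have width': "(\<integral>\<^sup>+x. ennreal ((U j x - L j x)\<^sup>2) \<partial>\<mu>) \<le> ennreal (\<epsilon>\<^sup>2)" for j
    unfolding diff_UL by (rule width)
  have meas: "L j \<in> borel_measurable \<mu>" "U j \<in> borel_measurable \<mu>" if "j < n" for j
    unfolding L_def U_def using meas_c meas_w that by auto
  have finite: "(\<integral>\<^sup>+x. ennreal ((U j x - L j x)\<^sup>2) \<partial>\<mu>) < \<infinity>" for j
    using width'[of j] by (rule le_less_trans) simp
  have small: "sqrt (enn2real (\<integral>\<^sup>+x. ennreal ((U j x - L j x)\<^sup>2) \<partial>\<mu>)) \<le> \<epsilon>" for j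
  proof -
    have "enn2real (\<integral>\<^sup>+x. ennreal ((U j x - L j x)\<^sup>2) \<partial>\<mu>) \<le> \<epsilon>\<^sup>2"
      using width'[of j] by (intro enn2real_leI) auto
    then show ?thesis using \<open>\<epsilon> \<ge> 0\<close> real_le_lsqrt by blast
  qed
  have brackets: "\<exists>j<n. \<forall>x\<in>S. L j x \<le> g x \<and> g x \<le> U j x" if g: "g \<in> \<G>" for g
  proof -
    obtain j where "j < n" and close: "\<forall>x\<in>S. \<bar>g x - c j x\<bar> \<le> w x"
      using approx g by blast
    have "\<forall>x\<in>S. L j x \<le> g x \<and> g x \<le> U j x"
      using close unfolding L_def U_def by (auto simp: abs_le_iff)
    with \<open>j < n\<close> show ?thesis by blast
  qed
  have "n \<in> {n. \<exists>L U :: nat \<Rightarrow> 'a \<Rightarrow> real.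
      (\<forall>j<n. L j \<in> borel_measurable \<mu> \<and> U j \<in> borel_measurable \<mu> \<and>
         sqrt (enn2real (\<integral>\<^sup>+x. ennreal ((U j x - L j x)\<^sup>2) \<partial>\<mu>)) \<le> \<epsilon> \<and>
         (\<integral>\<^sup>+x. ennreal ((U j x - L j x)\<^sup>2) \<partial>\<mu>) < \<infinity>) \<and>
      (\<forall>g\<in>\<G>. \<exists>j<n. \<forall>x\<in>S. L j x \<le> g x \<and> g x \<le> U j x)}"
    using meas finite small brackets by blast
  then show ?thesis
    unfolding bracketing_number_def by (rule INF_lower)
qed

lemma abs_diff_le_sup_dist:
  assumes "bdd_above ((\<lambda>xy. \<bar>f (fst xy) (snd xy) - g (fst xy) (snd xy)\<bar>) ` (S \<times> UNIV))"
    and "x \<in> S"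
  shows "\<bar>f x y - g x y\<bar> \<le> sup_dist S f g"
  unfolding sup_dist_def using cSUP_upper[OF _ assms(1), of "(x, y)"] assms(2) by simp

section \<open>Gaussian mixture densities\<close>

lemma mix_dens_eq_integral_normal_density:
  assumes "\<sigma> > 0"
  shows "mix_dens \<sigma> G x y = (\<integral>\<beta>. normal_density (x \<bullet> \<beta>) \<sigma> y \<partial>G)"
proof -
  have "(1 / \<sigma>) * std_normal_density ((y - m) / \<sigma>) = normal_density m \<sigma> y" for m
    using assms by (simp add: normal_density_def power_divide real_sqrt_mult field_simps)
  then show ?thesis unfolding mix_dens_def by simp
qed

lemma normal_density_le: "\<sigma> > 0 \<Longrightarrow> normal_density m \<sigma> y \<le> 1 / sqrt (2 * pi * \<sigma>\<^sup>2)"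
  unfolding normal_density_def by (auto intro!: divide_right_mono)

lemma measurable_mix_dens:
  assumes "\<sigma> > 0" and G: "mixing_measure R G"
  shows "(\<lambda>p. mix_dens \<sigma> G (fst p) (snd p)) \<in> borel_measurable (borel \<Otimes>\<^sub>M lborel)"
proof -
  have sG: "sets G = sets borel" and "prob_space G" using G by (auto simp: mixing_measure_def)
  then interpret prob_space G by simp
  have "(\<lambda>(xy, \<beta>::'a). normal_density (fst xy \<bullet> \<beta>) \<sigma> (snd xy))
          \<in> borel_measurable ((borel \<Otimes>\<^sub>M lborel) \<Otimes>\<^sub>M (borel :: 'a measure))"
    unfolding normal_density_def by measurable
  then have "(\<lambda>(xy, \<beta>). normal_density (fst xy \<bullet> \<beta>) \<sigma> (snd xy)) \<in> borel_measurable ((borel \<Otimes>\<^sub>M lborel) \<Otimes>\<^sub>M G)"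
    by (simp add: measurable_cong_sets[OF sets_pair_measure_cong[OF refl sG] refl])
  then show ?thesis
    unfolding mix_dens_eq_integral_normal_density[OF \<open>\<sigma> > 0\<close>]
    by (intro borel_measurable_lebesgue_integral) simp
qed

lemma integrable_normal_density_mixing:
  assumes "\<sigma> > 0" and G: "mixing_measure R G"
  shows "integrable G (\<lambda>\<beta>. normal_density (x \<bullet> \<beta>) \<sigma> y)"
proof -
  have sG: "sets G = sets borel" and "prob_space G" using G by (auto simp: mixing_measure_def)
  then interpret prob_space G by simp
  have "(\<lambda>\<beta>::'a. normal_density (x \<bullet> \<beta>) \<sigma> y) \<in> borel_measurable borel"
    unfolding normal_density_def by measurable
  then have "(\<lambda>\<beta>. normal_density (x \<bullet> \<beta>) \<sigma> y) \<in> borel_measurable G"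
    by (subst measurable_cong_sets[OF sG refl])
  then show ?thesis
    by (intro integrable_const_bound[where B="1 / sqrt (2 * pi * \<sigma>\<^sup>2)"])
       (use normal_density_le[OF \<open>\<sigma> > 0\<close>] in auto)
qed

lemma
  assumes "\<sigma> > 0" and G: "mixing_measure R G"
  shows mix_dens_nonneg: "0 \<le> mix_dens \<sigma> G x y"
    and mix_dens_le: "mix_dens \<sigma> G x y \<le> 1 / sqrt (2 * pi * \<sigma>\<^sup>2)"
proof -
  have "prob_space G" using G by (auto simp: mixing_measure_def)
  then interpret prob_space G .
  show "0 \<le> mix_dens \<sigma> G x y"
    unfolding mix_dens_eq_integral_normal_density[OF \<open>\<sigma> > 0\<close>] by (rule integral_nonneg_AE) simp
  have "mix_dens \<sigma> G x y \<le> (\<integral>\<beta>. 1 / sqrt (2 * pi * \<sigma>\<^sup>2) \<partial>G)"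
    unfolding mix_dens_eq_integral_normal_density[OF \<open>\<sigma> > 0\<close>]
    by (rule integral_mono) (use integrable_normal_density_mixing[OF \<open>\<sigma> > 0\<close> G] normal_density_le[OF \<open>\<sigma> > 0\<close>] in auto)
  then show "mix_dens \<sigma> G x y \<le> 1 / sqrt (2 * pi * \<sigma>\<^sup>2)" by (simp add: prob_space)
qed

lemma nn_integral_mix_dens:
  assumes "\<sigma> > 0" and G: "mixing_measure R G"
  shows "(\<integral>\<^sup>+y. ennreal (mix_dens \<sigma> G x y) \<partial>lborel) = 1"
proof -
  have sG: "sets G = sets borel" and "prob_space G" using G by (auto simp: mixing_measure_def)
  then interpret prob_space G by simp
  interpret pair_sigma_finite G lborel
    by (simp add: pair_sigma_finite.intro lborel.sigma_finite_measure_axioms sigma_finite_measure_axioms)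
  have "(\<lambda>(\<beta>::'a, y). ennreal (normal_density (x \<bullet> \<beta>) \<sigma> y)) \<in> borel_measurable (borel \<Otimes>\<^sub>M lborel)"
    unfolding normal_density_def by measurable
  then have meas: "(\<lambda>(\<beta>, y). ennreal (normal_density (x \<bullet> \<beta>) \<sigma> y)) \<in> borel_measurable (G \<Otimes>\<^sub>M lborel)"
    by (simp add: measurable_cong_sets[OF sets_pair_measure_cong[OF sG refl] refl])
  have "(\<integral>\<^sup>+y. ennreal (mix_dens \<sigma> G x y) \<partial>lborel)
      = (\<integral>\<^sup>+y. (\<integral>\<^sup>+\<beta>. ennreal (normal_density (x \<bullet> \<beta>) \<sigma> y) \<partial>G) \<partial>lborel)"
    unfolding mix_dens_eq_integral_normal_density[OF \<open>\<sigma> > 0\<close>]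
    by (intro nn_integral_cong nn_integral_eq_integral[symmetric]
        integrable_normal_density_mixing[OF \<open>\<sigma> > 0\<close> G]) auto
  also have "\<dots> = (\<integral>\<^sup>+\<beta>. (\<integral>\<^sup>+y. ennreal (normal_density (x \<bullet> \<beta>) \<sigma> y) \<partial>lborel) \<partial>G)"
    using Fubini'[OF meas] .
  also have "\<dots> = (\<integral>\<^sup>+\<beta>. 1 \<partial>G)"
    by (intro nn_integral_cong) (simp add: nn_integral_eq_integral \<open>\<sigma> > 0\<close>)
  finally show ?thesis by (simp add: emeasure_space_1)
qed

lemma is_prob_density_mix_dens:
  assumes "\<sigma> > 0" and G: "mixing_measure R G"
  shows "is_prob_density (mix_dens \<sigma> G x)"
proof -
  have meas: "mix_dens \<sigma> G x \<in> borel_measurable lborel"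
    using measurable_Pair2[OF measurable_mix_dens[OF assms], of x] by simp
  note nonneg = mix_dens_nonneg[OF assms] and one = nn_integral_mix_dens[OF assms, of x]
  have "integrable lborel (mix_dens \<sigma> G x)"
    by (rule integrableI_nonneg) (use meas nonneg one in auto)
  moreover have "(\<integral>y. mix_dens \<sigma> G x y \<partial>lborel) = 1"
    using integral_eq_nn_integral[OF meas] nonneg one by simp
  ultimately show ?thesis
    unfolding is_prob_density_def using meas nonneg by simp
qed

lemma abs_mix_dens_diff_le_sup_dist:
  assumes "\<sigma> > 0" and G: "mixing_measure R G" and G': "mixing_measure R G'" and "x \<in> S"
  shows "\<bar>mix_dens \<sigma> G x y - mix_dens \<sigma> G' x y\<bar> \<le> sup_dist S (mix_dens \<sigma> G) (mix_dens \<sigma> G')"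
proof (rule abs_diff_le_sup_dist[OF bdd_aboveI2 \<open>x \<in> S\<close>])
  fix xy
  show "\<bar>mix_dens \<sigma> G (fst xy) (snd xy) - mix_dens \<sigma> G' (fst xy) (snd xy)\<bar> \<le> 1 / sqrt (2 * pi * \<sigma>\<^sup>2)"
    using mix_dens_nonneg[OF \<open>\<sigma> > 0\<close> G, of "fst xy" "snd xy"] mix_dens_le[OF \<open>\<sigma> > 0\<close> G, of "fst xy" "snd xy"]
      mix_dens_nonneg[OF \<open>\<sigma> > 0\<close> G', of "fst xy" "snd xy"] mix_dens_le[OF \<open>\<sigma> > 0\<close> G', of "fst xy" "snd xy"]
    by (simp add: abs_le_iff)
qed

lemma measurable_hellinger2_mix_dens:
  assumes "\<sigma> > 0" and G: "mixing_measure R G" and G': "mixing_measure R G'"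
  shows "(\<lambda>x. hellinger2 (mix_dens \<sigma> G x) (mix_dens \<sigma> G' x)) \<in> borel_measurable borel"
proof -
  note [measurable] = measurable_mix_dens[OF \<open>\<sigma> > 0\<close> G] measurable_mix_dens[OF \<open>\<sigma> > 0\<close> G']
  show ?thesis unfolding hellinger2_def by measurable
qed

lemma measurable_nn_integral_sqrt_mix_dens:
  assumes "\<sigma> > 0" and G: "mixing_measure R G"
  shows "(\<lambda>x. \<integral>\<^sup>+y. ennreal (sqrt (mix_dens \<sigma> G x y)) \<partial>lborel) \<in> borel_measurable borel"
proof -
  note [measurable] = measurable_mix_dens[OF assms]
  show ?thesis by measurable
qed

lemma measurable_hellinger_envelope_mix_dens:
  assumes "\<sigma> > 0" and G: "mixing_measure R G"
  shows "(\<lambda>x. hellinger_envelope \<eta> (mix_dens \<sigma> G x)) \<in> borel_measurable borel"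
proof -
  note [measurable] = measurable_nn_integral_sqrt_mix_dens[OF assms]
  show ?thesis unfolding hellinger_envelope_def by measurable
qed

lemma abs_half_hellinger2_mix_dens_diff_le:
  assumes "\<sigma> > 0" and G: "mixing_measure R G" and G': "mixing_measure R G'"
    and Gstar: "mixing_measure R Gstar"
    and close: "sup_dist S (mix_dens \<sigma> G) (mix_dens \<sigma> G') \<le> \<eta>" and "x \<in> S"
  shows "\<bar>1/2 * hellinger2 (mix_dens \<sigma> G x) (mix_dens \<sigma> Gstar x)
            - 1/2 * hellinger2 (mix_dens \<sigma> G' x) (mix_dens \<sigma> Gstar x)\<bar>
         \<le> hellinger_envelope \<eta> (mix_dens \<sigma> Gstar x)"
  by (rule abs_half_hellinger2_diff_le_envelope[OF is_prob_density_mix_dens[OF \<open>\<sigma> > 0\<close> G]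
        is_prob_density_mix_dens[OF \<open>\<sigma> > 0\<close> G'] is_prob_density_mix_dens[OF \<open>\<sigma> > 0\<close> Gstar]])
     (use abs_mix_dens_diff_le_sup_dist[OF \<open>\<sigma> > 0\<close> G G' \<open>x \<in> S\<close>] close in \<open>rule order_trans\<close>)

lemma bracketing_number_half_hellinger2_le_cover_size:
  fixes n :: nat
  assumes "\<sigma> > 0" and Gstar: "mixing_measure R Gstar" and sets_\<mu>: "sets \<mu> = sets borel"
    and "\<epsilon> \<ge> 0"
    and width: "(\<integral>\<^sup>+x. ennreal ((2 * hellinger_envelope \<eta> (mix_dens \<sigma> Gstar x))\<^sup>2) \<partial>\<mu>) \<le> ennreal (\<epsilon>\<^sup>2)"
    and centres: "\<forall>j<n. c j \<in> mix_class \<sigma> R"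
    and cover: "\<forall>t\<in>mix_class \<sigma> R. \<exists>j<n. sup_dist S t (c j) \<le> \<eta>"
  shows "bracketing_number \<mu> S \<epsilon>
           {(\<lambda>x. 1/2 * hellinger2 (mix_dens \<sigma> G x) (mix_dens \<sigma> Gstar x)) | G. mixing_measure R G}
         \<le> enat n"
proof -
  note meas_\<mu> = measurable_cong_sets[OF sets_\<mu> refl]
  have "\<forall>j<n. \<exists>G. mixing_measure R G \<and> c j = mix_dens \<sigma> G"
    using centres unfolding mix_class_def by blast
  then obtain Gc where Gc: "\<And>j. j < n \<Longrightarrow> mixing_measure R (Gc j) \<and> c j = mix_dens \<sigma> (Gc j)"
    by metis
  have approx: "\<exists>j<n. \<forall>x\<in>S. \<bar>g x - 1/2 * hellinger2 (mix_dens \<sigma> (Gc j) x) (mix_dens \<sigma> Gstar x)\<bar>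
      \<le> hellinger_envelope \<eta> (mix_dens \<sigma> Gstar x)"
    if g_in: "g \<in> {(\<lambda>x. 1/2 * hellinger2 (mix_dens \<sigma> G x) (mix_dens \<sigma> Gstar x)) | G. mixing_measure R G}" for g
  proof -
    obtain G where G: "mixing_measure R G"
      and g: "g = (\<lambda>x. 1/2 * hellinger2 (mix_dens \<sigma> G x) (mix_dens \<sigma> Gstar x))"
      using g_in by blast
    then obtain j where "j < n" and close: "sup_dist S (mix_dens \<sigma> G) (c j) \<le> \<eta>"
      using cover unfolding mix_class_def by blast
    from Gc[OF \<open>j < n\<close>] have Gj: "mixing_measure R (Gc j)" and cj: "c j = mix_dens \<sigma> (Gc j)"
      by auto
    have "\<forall>x\<in>S. \<bar>g x - 1/2 * hellinger2 (mix_dens \<sigma> (Gc j) x) (mix_dens \<sigma> Gstar x)\<bar>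
        \<le> hellinger_envelope \<eta> (mix_dens \<sigma> Gstar x)"
      unfolding g using abs_half_hellinger2_mix_dens_diff_le[OF \<open>\<sigma> > 0\<close> G Gj Gstar close[unfolded cj]]
      by blast
    with \<open>j < n\<close> show ?thesis by blast
  qed
  have meas_centre: "(\<lambda>x. 1/2 * hellinger2 (mix_dens \<sigma> (Gc j) x) (mix_dens \<sigma> Gstar x)) \<in> borel_measurable \<mu>"
    if "j < n" for j
  proof -
    note [measurable] = measurable_hellinger2_mix_dens[OF \<open>\<sigma> > 0\<close> conjunct1[OF Gc[OF that]] Gstar]
    show ?thesis unfolding meas_\<mu> by measurable
  qed
  show ?thesis
  proof (rule bracketing_number_le_of_approximation[where
        c = "\<lambda>j x. 1/2 * hellinger2 (mix_dens \<sigma> (Gc j) x) (mix_dens \<sigma> Gstar x)", OF \<open>\<epsilon> \<ge> 0\<close> _ _ width])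
    show "(\<lambda>x. hellinger_envelope \<eta> (mix_dens \<sigma> Gstar x)) \<in> borel_measurable \<mu>"
      unfolding meas_\<mu> by (rule measurable_hellinger_envelope_mix_dens[OF \<open>\<sigma> > 0\<close> Gstar])
  qed (use meas_centre approx in \<open>simp_all add: Ball_def\<close>)
qed

theorem mainTheorem10:
  fixes \<sigma> B R \<epsilon> :: real and \<mu> Gstar :: "'a::euclidean_space measure"
  assumes "\<sigma> > 0" and "B > 0" and "R > 0"
    and "prob_space \<mu>" and "sets \<mu> = sets (borel :: 'a measure)"
    and "AE x in \<mu>. norm x \<le> B"
    and "mixing_measure R Gstar"
    and "(\<integral>\<^sup>+x. (\<integral>\<^sup>+y. ennreal (sqrt (mix_dens \<sigma> Gstar x y)) \<partial>lborel)\<^sup>2 \<partial>\<mu>) < \<infinity>"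
    and "\<epsilon> > 0"
  shows "bracketing_number \<mu> {x. norm x \<le> B} \<epsilon>
           {(\<lambda>x. 1/2 * hellinger2 (mix_dens \<sigma> G x) (mix_dens \<sigma> Gstar x)) | G. mixing_measure R G}
         \<le> covering_number (sup_dist {x. norm x \<le> B}) (mix_class \<sigma> R :: ('a \<Rightarrow> real \<Rightarrow> real) set)
             (\<epsilon>\<^sup>2 / (4 * enn2real (\<integral>\<^sup>+x. (\<integral>\<^sup>+y. ennreal (sqrt (mix_dens \<sigma> Gstar x y)) \<partial>lborel)\<^sup>2 \<partial>\<mu>)))"
proof -
  have "(\<lambda>x. \<integral>\<^sup>+y. ennreal (sqrt (mix_dens \<sigma> Gstar x y)) \<partial>lborel) \<in> borel_measurable \<mu>"
    unfolding measurable_cong_sets[OF \<open>sets \<mu> = sets borel\<close> refl]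
    by (rule measurable_nn_integral_sqrt_mix_dens[OF \<open>\<sigma> > 0\<close> \<open>mixing_measure R Gstar\<close>])
  note width = nn_integral_hellinger_envelope_le[OF this assms(8), of \<epsilon>]
  show ?thesis
    unfolding covering_number_def
  proof (rule INF_greatest, clarify)
    fix n :: nat and c :: "nat \<Rightarrow> 'a \<Rightarrow> real \<Rightarrow> real"
    assume "\<forall>j<n. c j \<in> mix_class \<sigma> R"
      and "\<forall>t\<in>mix_class \<sigma> R. \<exists>j<n. sup_dist {x. norm x \<le> B} t (c j)
             \<le> \<epsilon>\<^sup>2 / (4 * enn2real (\<integral>\<^sup>+x. (\<integral>\<^sup>+y. ennreal (sqrt (mix_dens \<sigma> Gstar x y)) \<partial>lborel)\<^sup>2 \<partial>\<mu>))"
    then show "bracketing_number \<mu> {x. norm x \<le> B} \<epsilon>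
        {(\<lambda>x. 1/2 * hellinger2 (mix_dens \<sigma> G x) (mix_dens \<sigma> Gstar x)) | G. mixing_measure R G} \<le> enat n"
      by (rule bracketing_number_half_hellinger2_le_cover_size[OF \<open>\<sigma> > 0\<close> \<open>mixing_measure R Gstar\<close>
          \<open>sets \<mu> = sets borel\<close> less_imp_le[OF \<open>\<epsilon> > 0\<close>] width])
  qed
qed

end
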